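(* Fix $K\in\mathbb{R}$ and consider the framed curvature flow with $\theta$-velocity $$\upsilon_\theta=-\kappa\psi_2^{-1}K-(\kappa\,\partial_s\psi_3+2\,\partial_s\kappa\,\psi_3)\kappa^{-2}\psi_1-\kappa\psi_2^{-1}\psi_3^2-(\partial_s^2\kappa-\kappa\psi_3^2)\kappa^{-2}\psi_2 .$$ Then the trajectory surface $\Sigma_{\underline t}$ generated by this flow has constant Gaussian curvature equal to $K$.
   Context: $S^1=\mathbb{R}/2\pi\mathbb{Z}$; closed curves $\Gamma_t$ parametrized by $\gamma(t,\cdot):S^1\to\mathbb{R}^3$, $g=\|\partial_u\gamma\|$, $ds=g\,du$, $\partial_s=g^{-1}\partial_u$; Frenet frame $T,N,B$, curvature $\kappa$, torsion $\tau$. For an angle function $\theta$: $\nu_\theta=\cos\theta N+\sin\theta B$, $\psi_1=\kappa\cos\theta$, $\psi_2=\kappa\sin\theta$, $\psi_3=\tau+\partial_s\theta$; the formula for $\upsilon_\theta$ presupposes $\kappa>0$ and $\psi_2\neq0$. Framed curvature flow: $\partial_t\gamma=\kappa\nu_\theta$, $\partial_t\theta=\upsilon_\theta$ on $[0,\underline t)\times S^1$. Trajectory surface $\Sigma_{\underline t}=\bigcup_{t\in[0,\underline t)}\Gamma_t$, parametrized by $\gamma(t,u)$. *)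

theory Defs
  imports "HOL-Analysis.Analysis"
begin

text \<open>Maps on the strip are written in curried form f t u, t the time, u the
  curve parameter (S^1 = R/2piZ is represented by 2pi-periodicity in u).\<close>

definition Dt :: "real \<Rightarrow> (real \<Rightarrow> real \<Rightarrow> 'a::real_normed_vector) \<Rightarrow> real \<Rightarrow> real \<Rightarrow> 'a" where
  "Dt tb f t u = vector_derivative (\<lambda>t'. f t' u) (at t within {0..<tb})"

definition Du :: "(real \<Rightarrow> real \<Rightarrow> 'a::real_normed_vector) \<Rightarrow> real \<Rightarrow> real \<Rightarrow> 'a" where
  "Du f t u = vector_derivative (\<lambda>u'. f t u') (at u)"

text \<open>Iterated partial derivatives: True = d/dt, False = d/du.\<close>
fun pd :: "real \<Rightarrow> bool list \<Rightarrow> (real \<Rightarrow> real \<Rightarrow> 'a::real_normed_vector) \<Rightarrow> real \<Rightarrow> real \<Rightarrow> 'a" where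
  "pd tb [] f = f"
| "pd tb (True # ds) f = Dt tb (pd tb ds f)"
| "pd tb (False # ds) f = Du (pd tb ds f)"

definition smooth_strip :: "real \<Rightarrow> (real \<Rightarrow> real \<Rightarrow> 'a::real_normed_vector) \<Rightarrow> bool" where
  "smooth_strip tb f \<longleftrightarrow>
     (\<forall>ds. continuous_on ({0..<tb} \<times> UNIV) (\<lambda>(t,u). pd tb ds f t u) \<and>
       (\<forall>t\<in>{0..<tb}. \<forall>u.
          ((\<lambda>t'. pd tb ds f t' u) has_vector_derivative pd tb (True # ds) f t u) (at t within {0..<tb}) \<and>
          ((\<lambda>u'. pd tb ds f t u') has_vector_derivative pd tb (False # ds) f t u) (at u)))"

definition speed :: "(real \<Rightarrow> real \<Rightarrow> real^3) \<Rightarrow> real \<Rightarrow> real \<Rightarrow> real" where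
  "speed \<gamma> t u = norm (Du \<gamma> t u)"

definition Ds :: "(real \<Rightarrow> real \<Rightarrow> real^3) \<Rightarrow> (real \<Rightarrow> real \<Rightarrow> 'a::real_normed_vector) \<Rightarrow> real \<Rightarrow> real \<Rightarrow> 'a" where
  "Ds \<gamma> f t u = (1 / speed \<gamma> t u) *\<^sub>R Du f t u"

definition tangent :: "(real \<Rightarrow> real \<Rightarrow> real^3) \<Rightarrow> real \<Rightarrow> real \<Rightarrow> real^3" where
  "tangent \<gamma> = Ds \<gamma> \<gamma>"

definition curvature :: "(real \<Rightarrow> real \<Rightarrow> real^3) \<Rightarrow> real \<Rightarrow> real \<Rightarrow> real" where
  "curvature \<gamma> t u = norm (Ds \<gamma> (tangent \<gamma>) t u)"

definition normal :: "(real \<Rightarrow> real \<Rightarrow> real^3) \<Rightarrow> real \<Rightarrow> real \<Rightarrow> real^3" where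
  "normal \<gamma> t u = (1 / curvature \<gamma> t u) *\<^sub>R Ds \<gamma> (tangent \<gamma>) t u"

definition binormal :: "(real \<Rightarrow> real \<Rightarrow> real^3) \<Rightarrow> real \<Rightarrow> real \<Rightarrow> real^3" where
  "binormal \<gamma> t u = cross3 (tangent \<gamma> t u) (normal \<gamma> t u)"

definition torsion :: "(real \<Rightarrow> real \<Rightarrow> real^3) \<Rightarrow> real \<Rightarrow> real \<Rightarrow> real" where
  "torsion \<gamma> t u = Ds \<gamma> (normal \<gamma>) t u \<bullet> binormal \<gamma> t u"

definition nu :: "(real \<Rightarrow> real \<Rightarrow> real^3) \<Rightarrow> (real \<Rightarrow> real \<Rightarrow> real) \<Rightarrow> real \<Rightarrow> real \<Rightarrow> real^3" where
  "nu \<gamma> \<theta> t u = cos (\<theta> t u) *\<^sub>R normal \<gamma> t u + sin (\<theta> t u) *\<^sub>R binormal \<gamma> t u"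

definition psi1 :: "(real \<Rightarrow> real \<Rightarrow> real^3) \<Rightarrow> (real \<Rightarrow> real \<Rightarrow> real) \<Rightarrow> real \<Rightarrow> real \<Rightarrow> real" where
  "psi1 \<gamma> \<theta> t u = curvature \<gamma> t u * cos (\<theta> t u)"

definition psi2 :: "(real \<Rightarrow> real \<Rightarrow> real^3) \<Rightarrow> (real \<Rightarrow> real \<Rightarrow> real) \<Rightarrow> real \<Rightarrow> real \<Rightarrow> real" where
  "psi2 \<gamma> \<theta> t u = curvature \<gamma> t u * sin (\<theta> t u)"

definition psi3 :: "(real \<Rightarrow> real \<Rightarrow> real^3) \<Rightarrow> (real \<Rightarrow> real \<Rightarrow> real) \<Rightarrow> real \<Rightarrow> real \<Rightarrow> real" where
  "psi3 \<gamma> \<theta> t u = torsion \<gamma> t u + Ds \<gamma> \<theta> t u"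

definition upsilon :: "real \<Rightarrow> (real \<Rightarrow> real \<Rightarrow> real^3) \<Rightarrow> (real \<Rightarrow> real \<Rightarrow> real) \<Rightarrow> real \<Rightarrow> real \<Rightarrow> real" where
  "upsilon K \<gamma> \<theta> t u =
     (let \<kappa> = curvature \<gamma> t u; \<psi>\<^sub>1 = psi1 \<gamma> \<theta> t u; \<psi>\<^sub>2 = psi2 \<gamma> \<theta> t u; \<psi>\<^sub>3 = psi3 \<gamma> \<theta> t u;
          ds\<psi>\<^sub>3 = Ds \<gamma> (psi3 \<gamma> \<theta>) t u; ds\<kappa> = Ds \<gamma> (curvature \<gamma>) t u;
          dss\<kappa> = Ds \<gamma> (Ds \<gamma> (curvature \<gamma>)) t u
      in - \<kappa> * inverse \<psi>\<^sub>2 * K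
         - (\<kappa> * ds\<psi>\<^sub>3 + 2 * ds\<kappa> * \<psi>\<^sub>3) * inverse (\<kappa>\<^sup>2) * \<psi>\<^sub>1
         - \<kappa> * inverse \<psi>\<^sub>2 * \<psi>\<^sub>3\<^sup>2
         - (dss\<kappa> - \<kappa> * \<psi>\<^sub>3\<^sup>2) * inverse (\<kappa>\<^sup>2) * \<psi>\<^sub>2)"

definition gauss_curv :: "real \<Rightarrow> (real \<Rightarrow> real \<Rightarrow> real^3) \<Rightarrow> real \<Rightarrow> real \<Rightarrow> real" where
  "gauss_curv tb X t u =
     (let Xt = Dt tb X t u; Xu = Du X t u;
          n = (1 / norm (cross3 Xt Xu)) *\<^sub>R cross3 Xt Xu;
          E = Xt \<bullet> Xt; F = Xt \<bullet> Xu; G = Xu \<bullet> Xu;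
          L = Dt tb (Dt tb X) t u \<bullet> n;
          M = Du (Dt tb X) t u \<bullet> n;
          N = Du (Du X) t u \<bullet> n
      in (L * N - M\<^sup>2) / (E * G - F\<^sup>2))"

end

(* The trajectory surface X(t,u) = gamma(t,u) has X_t = kappa nu and X_u = g T (g the speed);
   these are orthogonal and the unit normal is nu x T = sin theta N - cos theta B.  Hence
   E = kappa^2, F = 0, G = g^2, and the second fundamental form has coefficients
   L = -kappa (d_t theta + d_t N . B), M = -g kappa psi_3 and g^2 kappa sin theta, so that
   K = -sin theta (d_t theta + d_t N . B) - psi_3^2.
   Along the flow N is the normalised component of gamma_uu orthogonal to gamma_u; differentiating
   this in t and commuting d_t with d_u gives d_t N . B = kappa^-1 d_s^2 (d_t gamma) . B, which the
   Frenet-Serret equations express through kappa, theta and the torsion.  The prescribed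
   upsilon_theta is exactly the value of d_t theta for which K equals the given constant. *)

theory Submission
  imports Defs
begin

section \<open>Vector derivatives of functions of a real variable\<close>

lemma bounded_bilinear_cross3: "bounded_bilinear (cross3 :: real^3 \<Rightarrow> real^3 \<Rightarrow> real^3)"
  using bilinear_conv_bounded_bilinear bilinear_cross by blast

lemma differentiable_bilinear:
  fixes f :: "real \<Rightarrow> 'a::real_normed_vector" and g :: "real \<Rightarrow> 'b::real_normed_vector"
    and bl :: "'a \<Rightarrow> 'b \<Rightarrow> 'c::real_normed_vector"
  assumes "bounded_bilinear bl"
    and "f differentiable (at x within s)" and "g differentiable (at x within s)"
  shows "(\<lambda>x. bl (f x) (g x)) differentiable (at x within s)"
  using bounded_bilinear.has_vector_derivative[OF assms(1)
      assms(2)[unfolded vector_derivative_works] assms(3)[unfolded vector_derivative_works]]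
  by (rule differentiableI_vector)

lemma vector_derivative_bilinear_within:
  fixes f :: "real \<Rightarrow> 'a::real_normed_vector" and g :: "real \<Rightarrow> 'b::real_normed_vector"
    and bl :: "'a \<Rightarrow> 'b \<Rightarrow> 'c::real_normed_vector"
  assumes "bounded_bilinear bl" and "at x within s \<noteq> bot"
    and "f differentiable (at x within s)" and "g differentiable (at x within s)"
  shows "vector_derivative (\<lambda>x. bl (f x) (g x)) (at x within s) =
     bl (f x) (vector_derivative g (at x within s)) + bl (vector_derivative f (at x within s)) (g x)"
  using bounded_bilinear.has_vector_derivative[OF assms(1)
      assms(3)[unfolded vector_derivative_works] assms(4)[unfolded vector_derivative_works]]
  by (rule vector_derivative_within[OF assms(2)])

lemma vector_derivative_add_within:
  fixes f g :: "real \<Rightarrow> 'a::real_normed_vector"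
  assumes "at x within s \<noteq> bot" "f differentiable (at x within s)" "g differentiable (at x within s)"
  shows "vector_derivative (\<lambda>x. f x + g x) (at x within s) =
     vector_derivative f (at x within s) + vector_derivative g (at x within s)"
  using has_vector_derivative_add[OF assms(2,3)[unfolded vector_derivative_works]]
  by (rule vector_derivative_within[OF assms(1)])

lemma vector_derivative_diff_within:
  fixes f g :: "real \<Rightarrow> 'a::real_normed_vector"
  assumes "at x within s \<noteq> bot" "f differentiable (at x within s)" "g differentiable (at x within s)"
  shows "vector_derivative (\<lambda>x. f x - g x) (at x within s) =
     vector_derivative f (at x within s) - vector_derivative g (at x within s)"
  using has_vector_derivative_diff[OF assms(2,3)[unfolded vector_derivative_works]]
  by (rule vector_derivative_within[OF assms(1)])

lemma has_vector_derivative_real_chain: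
  fixes f :: "real \<Rightarrow> real"
  assumes "DERIV h (f x) :> h'" and "(f has_vector_derivative f') (at x within s)"
  shows "((\<lambda>x. h (f x)) has_vector_derivative h' * f') (at x within s)"
  using DERIV_chain2[OF assms(1)
      assms(2)[unfolded has_real_derivative_iff_has_vector_derivative[symmetric]]]
  by (simp add: has_real_derivative_iff_has_vector_derivative)

lemma differentiable_real_chain:
  fixes f :: "real \<Rightarrow> real"
  assumes "DERIV h (f x) :> h'" and "f differentiable (at x within s)"
  shows "(\<lambda>x. h (f x)) differentiable (at x within s)"
  using has_vector_derivative_real_chain[OF assms(1) assms(2)[unfolded vector_derivative_works]]
  by (rule differentiableI_vector)

lemma vector_derivative_real_chain_within:
  fixes f :: "real \<Rightarrow> real"
  assumes "at x within s \<noteq> bot" "DERIV h (f x) :> h'" and "f differentiable (at x within s)"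
  shows "vector_derivative (\<lambda>x. h (f x)) (at x within s) = h' * vector_derivative f (at x within s)"
  using has_vector_derivative_real_chain[OF assms(2) assms(3)[unfolded vector_derivative_works]]
  by (rule vector_derivative_within[OF assms(1)])

lemma differentiable_norm_within:
  fixes f :: "real \<Rightarrow> 'a::real_inner"
  assumes "f x \<noteq> 0" "f differentiable (at x within s)"
  shows "(\<lambda>x. norm (f x)) differentiable (at x within s)"
  using differentiable_compose[OF differentiable_norm_at[OF assms(1)] assms(2)] .

lemma vector_derivative_norm_within:
  fixes f :: "real \<Rightarrow> 'a::real_inner"
  assumes "at x within s \<noteq> bot" "f x \<noteq> 0" "f differentiable (at x within s)"
  shows "vector_derivative (\<lambda>x. norm (f x)) (at x within s) =
    sgn (f x) \<bullet> vector_derivative f (at x within s)"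
proof -
  have "((\<lambda>x. norm (f x)) has_vector_derivative
      (vector_derivative f (at x within s) \<bullet> sgn (f x))) (at x within s)"
    using vector_derivative_diff_chain_within[OF assms(3)[unfolded vector_derivative_works]
        has_derivative_at_withinI[OF has_derivative_norm[OF assms(2)]]]
    by (simp add: o_def)
  then show ?thesis by (simp add: vector_derivative_within[OF assms(1)] inner_commute)
qed

lemma vector_derivative_inner_const_within:
  fixes f h :: "real \<Rightarrow> 'a::real_inner"
  assumes nb: "at x within S \<noteq> bot" and x: "x \<in> S"
    and df: "f differentiable (at x within S)" and dh: "h differentiable (at x within S)"
    and c: "\<And>y. y \<in> S \<Longrightarrow> f y \<bullet> h y = c"
  shows "f x \<bullet> vector_derivative h (at x within S) + vector_derivative f (at x within S) \<bullet> h x = 0"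
proof -
  have "vector_derivative (\<lambda>y. f y \<bullet> h y) (at x within S) =
      f x \<bullet> vector_derivative h (at x within S) + vector_derivative f (at x within S) \<bullet> h x"
    by (rule vector_derivative_bilinear_within[OF bounded_bilinear_inner nb df dh])
  moreover have "((\<lambda>y. f y \<bullet> h y) has_vector_derivative 0) (at x within S)"
    by (rule has_vector_derivative_transform[OF x _ has_vector_derivative_const[of c]]) (simp add: c)
  ultimately show ?thesis by (simp add: vector_derivative_within[OF nb])
qed

lemma differentiable_sgn_within:
  fixes w :: "real \<Rightarrow> 'a::real_inner"
  assumes "w x \<noteq> 0" "w differentiable (at x within s)"
  shows "(\<lambda>x. sgn (w x)) differentiable (at x within s)"
  unfolding sgn_div_norm divide_inverse_commute
  using assms by (intro differentiable_scaleR differentiable_inverse differentiable_norm_within) auto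

lemma vector_derivative_sgn_inner_orthogonal:
  fixes w :: "real \<Rightarrow> 'a::real_inner"
  assumes nb: "at x within s \<noteq> bot" and w: "w x \<noteq> 0" "w differentiable (at x within s)"
    and b: "w x \<bullet> b = 0"
  shows "vector_derivative (\<lambda>x. sgn (w x)) (at x within s) \<bullet> b =
    (vector_derivative w (at x within s) \<bullet> b) / norm (w x)"
proof -
  have "(\<lambda>x. inverse (norm (w x))) differentiable (at x within s)"
    using w by (intro differentiable_inverse differentiable_norm_within) auto
  then show ?thesis
    unfolding sgn_div_norm divide_inverse_commute
    using w b by (simp add: vector_derivative_bilinear_within[OF bounded_bilinear_scaleR nb]
        inner_add_left divide_inverse_commute)
qed

definition rejection :: "'a::real_inner \<Rightarrow> 'a \<Rightarrow> 'a" where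
  "rejection x v = v - ((x \<bullet> v) / (x \<bullet> x)) *\<^sub>R x"

lemma differentiable_rejection_within:
  fixes x1 x2 :: "real \<Rightarrow> 'a::real_inner"
  assumes "x1 x \<noteq> 0" "x1 differentiable (at x within s)" "x2 differentiable (at x within s)"
  shows "(\<lambda>x. rejection (x1 x) (x2 x)) differentiable (at x within s)"
  unfolding rejection_def using assms by (intro derivative_intros differentiable_inner) auto

lemma vector_derivative_rejection_inner_orthogonal:
  fixes x1 x2 :: "real \<Rightarrow> 'a::real_inner"
  assumes nb: "at x within s \<noteq> bot" and x1: "x1 x \<noteq> 0" "x1 differentiable (at x within s)"
    and x2: "x2 differentiable (at x within s)" and b: "x1 x \<bullet> b = 0"
  shows "vector_derivative (\<lambda>x. rejection (x1 x) (x2 x)) (at x within s) \<bullet> b =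
    vector_derivative x2 (at x within s) \<bullet> b
    - (x1 x \<bullet> x2 x) / (x1 x \<bullet> x1 x) * (vector_derivative x1 (at x within s) \<bullet> b)"
proof -
  have c: "(\<lambda>x. (x1 x \<bullet> x2 x) / (x1 x \<bullet> x1 x)) differentiable (at x within s)"
    using x1 x2 by (intro derivative_intros differentiable_inner) auto
  show ?thesis
    unfolding rejection_def
    using x1 x2 b c
    by (simp add: vector_derivative_diff_within[OF nb]
        vector_derivative_bilinear_within[OF bounded_bilinear_scaleR nb]
        differentiable_bilinear[OF bounded_bilinear_scaleR] inner_diff_left inner_add_left)
qed

lemma vector_derivative_rotated_frame_inner:
  fixes N B :: "real \<Rightarrow> 'a::real_inner" and \<theta> :: "real \<Rightarrow> real"
  assumes nb: "at x within S \<noteq> bot" and x: "x \<in> S"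
    and diff: "N differentiable (at x within S)" "B differentiable (at x within S)"
      "\<theta> differentiable (at x within S)"
    and frame: "\<And>y. y \<in> S \<Longrightarrow> N y \<bullet> N y = 1 \<and> B y \<bullet> B y = 1 \<and> N y \<bullet> B y = 0"
  shows "vector_derivative (\<lambda>y. cos (\<theta> y) *\<^sub>R N y + sin (\<theta> y) *\<^sub>R B y) (at x within S)
      \<bullet> (sin (\<theta> x) *\<^sub>R N x - cos (\<theta> x) *\<^sub>R B x)
    = - vector_derivative \<theta> (at x within S) - vector_derivative N (at x within S) \<bullet> B x"
proof -
  let ?D = "\<lambda>f. vector_derivative f (at x within S)"
  have NN: "N x \<bullet> ?D N = 0" and BB: "B x \<bullet> ?D B = 0" and NB: "N x \<bullet> ?D B = - (?D N \<bullet> B x)"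
    using vector_derivative_inner_const_within[OF nb x diff(1) diff(1), of 1]
      vector_derivative_inner_const_within[OF nb x diff(2) diff(2), of 1]
      vector_derivative_inner_const_within[OF nb x diff(1) diff(2), of 0] frame
    by (auto simp: inner_commute eq_neg_iff_add_eq_0)
  have sc: "(\<lambda>y. sin (\<theta> y)) differentiable (at x within S)"
    "(\<lambda>y. cos (\<theta> y)) differentiable (at x within S)"
    using diff(3)
    by (auto intro: differentiable_real_chain[OF DERIV_sin] differentiable_real_chain[OF DERIV_cos])
  have Dnu: "?D (\<lambda>y. cos (\<theta> y) *\<^sub>R N y + sin (\<theta> y) *\<^sub>R B y) =
      cos (\<theta> x) *\<^sub>R ?D N - (sin (\<theta> x) * ?D \<theta>) *\<^sub>R N x
      + (sin (\<theta> x) *\<^sub>R ?D B + (cos (\<theta> x) * ?D \<theta>) *\<^sub>R B x)"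
    using diff sc
    by (simp add: vector_derivative_add_within[OF nb]
        vector_derivative_bilinear_within[OF bounded_bilinear_scaleR nb]
        differentiable_bilinear[OF bounded_bilinear_scaleR]
        vector_derivative_real_chain_within[OF nb DERIV_sin]
        vector_derivative_real_chain_within[OF nb DERIV_cos] algebra_simps)
  show ?thesis
    unfolding Dnu using frame[OF x] NN BB NB
    by (simp add: inner_add_left inner_diff_left inner_add_right inner_diff_right inner_commute)
      (use sin_cos_squared_add3[of "\<theta> x"] in algebra)
qed

section \<open>Smooth functions of a real variable\<close>

definition vderiv :: "(real \<Rightarrow> 'a::real_normed_vector) \<Rightarrow> real \<Rightarrow> 'a" where
  "vderiv f x = vector_derivative f (at x)"

fun Ck :: "nat \<Rightarrow> (real \<Rightarrow> 'a::real_normed_vector) \<Rightarrow> bool" where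
  "Ck 0 f \<longleftrightarrow> True"
| "Ck (Suc k) f \<longleftrightarrow> (\<forall>x. f differentiable (at x)) \<and> Ck k (vderiv f)"

definition smooth :: "(real \<Rightarrow> 'a::real_normed_vector) \<Rightarrow> bool" where
  "smooth f \<longleftrightarrow> (\<forall>k. Ck k f)"

lemma Ck_Suc_imp_Ck: "Ck (Suc k) f \<Longrightarrow> Ck k f"
  by (induction k arbitrary: f) auto

lemma smooth_differentiable: "smooth f \<Longrightarrow> f differentiable (at x within s)"
  unfolding smooth_def by (metis Ck.simps(2) differentiable_at_withinI)

lemma smooth_vderiv: "smooth f \<Longrightarrow> smooth (vderiv f)"
  unfolding smooth_def using Ck.simps(2) by blast

lemma vderiv_add:
  "f differentiable (at x) \<Longrightarrow> g differentiable (at x) \<Longrightarrow>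
    vderiv (\<lambda>x. f x + g x) x = vderiv f x + vderiv g x"
  by (simp add: vderiv_def)

lemma vderiv_diff:
  "f differentiable (at x) \<Longrightarrow> g differentiable (at x) \<Longrightarrow>
    vderiv (\<lambda>x. f x - g x) x = vderiv f x - vderiv g x"
  by (simp add: vderiv_def)

lemma vderiv_bilinear:
  "bounded_bilinear bl \<Longrightarrow> f differentiable (at x) \<Longrightarrow> g differentiable (at x) \<Longrightarrow>
    vderiv (\<lambda>x. bl (f x) (g x)) x = bl (f x) (vderiv g x) + bl (vderiv f x) (g x)"
  unfolding vderiv_def by (rule vector_derivative_bilinear_within) auto

lemma vderiv_real_chain:
  fixes f :: "real \<Rightarrow> real"
  shows "DERIV h (f x) :> h' \<Longrightarrow> f differentiable (at x) \<Longrightarrow> vderiv (\<lambda>x. h (f x)) x = h' * vderiv f x"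
  unfolding vderiv_def by (rule vector_derivative_real_chain_within) auto

lemma vderiv_norm:
  fixes f :: "real \<Rightarrow> 'a::real_inner"
  shows "f x \<noteq> 0 \<Longrightarrow> f differentiable (at x) \<Longrightarrow> vderiv (\<lambda>x. norm (f x)) x = sgn (f x) \<bullet> vderiv f x"
  unfolding vderiv_def by (rule vector_derivative_norm_within) auto

lemma Ck_const: "Ck k (\<lambda>x. c)"
proof (induction k arbitrary: c)
  case (Suc k)
  have "vderiv (\<lambda>x. c) = (\<lambda>x. 0)" by (simp add: vderiv_def fun_eq_iff)
  then show ?case using Suc by simp
qed simp

lemma Ck_add: "Ck k f \<Longrightarrow> Ck k g \<Longrightarrow> Ck k (\<lambda>x. f x + g x)"
proof (induction k arbitrary: f g)
  case (Suc k)
  then have "vderiv (\<lambda>x. f x + g x) = (\<lambda>x. vderiv f x + vderiv g x)"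
    by (simp add: vderiv_add fun_eq_iff)
  then show ?case using Suc by simp
qed simp

lemma Ck_diff: "Ck k f \<Longrightarrow> Ck k g \<Longrightarrow> Ck k (\<lambda>x. f x - g x)"
proof (induction k arbitrary: f g)
  case (Suc k)
  then have "vderiv (\<lambda>x. f x - g x) = (\<lambda>x. vderiv f x - vderiv g x)"
    by (simp add: vderiv_diff fun_eq_iff)
  then show ?case using Suc by simp
qed simp

lemma Ck_minus: "Ck k f \<Longrightarrow> Ck k (\<lambda>x. - f x)"
  using Ck_diff[where f = "\<lambda>x. 0", OF Ck_const] by simp

lemma Ck_bilinear:
  assumes "bounded_bilinear bl"
  shows "Ck k f \<Longrightarrow> Ck k g \<Longrightarrow> Ck k (\<lambda>x. bl (f x) (g x))"
proof (induction k arbitrary: f g)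
  case (Suc k)
  then have "vderiv (\<lambda>x. bl (f x) (g x)) = (\<lambda>x. bl (f x) (vderiv g x) + bl (vderiv f x) (g x))"
    by (simp add: vderiv_bilinear[OF assms] fun_eq_iff)
  moreover have "Ck k (\<lambda>x. bl (f x) (vderiv g x) + bl (vderiv f x) (g x))"
    using Suc by (intro Ck_add Suc.IH) (auto intro: Ck_Suc_imp_Ck)
  ultimately show ?case
    using Suc.prems by (auto intro: differentiable_bilinear[OF assms])
qed simp

lemma Ck_inverse:
  fixes f :: "real \<Rightarrow> real"
  shows "(\<And>x. f x \<noteq> 0) \<Longrightarrow> Ck k f \<Longrightarrow> Ck k (\<lambda>x. inverse (f x))"
proof (induction k arbitrary: f)
  case (Suc k)
  then have "vderiv (\<lambda>x. inverse (f x)) = (\<lambda>x. - (inverse (f x) * inverse (f x)) * vderiv f x)"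
    by (simp add: vderiv_real_chain[OF DERIV_inverse] fun_eq_iff power2_eq_square)
  moreover have "Ck k (\<lambda>x. - (inverse (f x) * inverse (f x)) * vderiv f x)"
    using Suc Ck_Suc_imp_Ck
    by (intro Ck_bilinear[OF bounded_bilinear_mult] Ck_minus) auto
  ultimately show ?case
    using Suc.prems by (auto intro: differentiable_real_chain[OF DERIV_inverse])
qed simp

lemma Ck_norm:
  fixes f :: "real \<Rightarrow> 'a::real_inner"
  shows "(\<And>x. f x \<noteq> 0) \<Longrightarrow> Ck k f \<Longrightarrow> Ck k (\<lambda>x. norm (f x))"
proof (induction k arbitrary: f)
  case (Suc k)
  then have "vderiv (\<lambda>x. norm (f x)) = (\<lambda>x. inverse (norm (f x)) * (f x \<bullet> vderiv f x))"
    by (simp add: vderiv_norm sgn_div_norm fun_eq_iff divide_inverse)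
  moreover have "Ck k (\<lambda>x. inverse (norm (f x)) * (f x \<bullet> vderiv f x))"
    using Suc Ck_Suc_imp_Ck
    by (intro Ck_bilinear[OF bounded_bilinear_mult] Ck_inverse
        Ck_bilinear[OF bounded_bilinear_inner]) auto
  ultimately show ?case
    using Suc.prems by (auto intro: differentiable_norm_within)
qed simp

lemma Ck_sin_cos:
  fixes f :: "real \<Rightarrow> real"
  shows "Ck k f \<Longrightarrow> Ck k (\<lambda>x. sin (f x)) \<and> Ck k (\<lambda>x. cos (f x))"
proof (induction k arbitrary: f)
  case (Suc k)
  then have "vderiv (\<lambda>x. sin (f x)) = (\<lambda>x. cos (f x) * vderiv f x)"
    and "vderiv (\<lambda>x. cos (f x)) = (\<lambda>x. - sin (f x) * vderiv f x)"
    by (simp_all add: vderiv_real_chain[OF DERIV_sin] vderiv_real_chain[OF DERIV_cos] fun_eq_iff)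
  moreover have "Ck k (\<lambda>x. cos (f x) * vderiv f x)" "Ck k (\<lambda>x. - sin (f x) * vderiv f x)"
    using Suc Ck_Suc_imp_Ck by (auto intro!: Ck_bilinear[OF bounded_bilinear_mult] Ck_minus)
  ultimately show ?case
    using Suc.prems by (auto intro: differentiable_real_chain[OF DERIV_sin]
        differentiable_real_chain[OF DERIV_cos])
qed simp

lemma smooth_const: "smooth (\<lambda>x. c)"
  by (simp add: smooth_def Ck_const)

lemma smooth_add: "smooth f \<Longrightarrow> smooth g \<Longrightarrow> smooth (\<lambda>x. f x + g x)"
  by (simp add: smooth_def Ck_add)

lemma smooth_diff: "smooth f \<Longrightarrow> smooth g \<Longrightarrow> smooth (\<lambda>x. f x - g x)"
  by (simp add: smooth_def Ck_diff)

lemma smooth_minus: "smooth f \<Longrightarrow> smooth (\<lambda>x. - f x)"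
  by (simp add: smooth_def Ck_minus)

lemma smooth_scaleR: "smooth f \<Longrightarrow> smooth g \<Longrightarrow> smooth (\<lambda>x. f x *\<^sub>R g x)"
  by (simp add: smooth_def Ck_bilinear[OF bounded_bilinear_scaleR])

lemma smooth_mult: "smooth f \<Longrightarrow> smooth g \<Longrightarrow> smooth (\<lambda>x. f x * g x :: real)"
  by (simp add: smooth_def Ck_bilinear[OF bounded_bilinear_mult])

lemma smooth_inner: "smooth f \<Longrightarrow> smooth g \<Longrightarrow> smooth (\<lambda>x. f x \<bullet> g x)"
  by (simp add: smooth_def Ck_bilinear[OF bounded_bilinear_inner])

lemma smooth_cross3: "smooth f \<Longrightarrow> smooth g \<Longrightarrow> smooth (\<lambda>x. cross3 (f x) (g x))"
  by (simp add: smooth_def Ck_bilinear[OF bounded_bilinear_cross3])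

lemma smooth_inverse: "(\<And>x. f x \<noteq> 0) \<Longrightarrow> smooth f \<Longrightarrow> smooth (\<lambda>x. inverse (f x) :: real)"
  by (simp add: smooth_def Ck_inverse)

lemma smooth_norm: "(\<And>x. f x \<noteq> 0) \<Longrightarrow> smooth f \<Longrightarrow> smooth (\<lambda>x. norm (f x :: 'a::real_inner))"
  by (simp add: smooth_def Ck_norm)

lemma smooth_sin: "smooth f \<Longrightarrow> smooth (\<lambda>x. sin (f x :: real))"
  by (simp add: smooth_def Ck_sin_cos)

lemma smooth_cos: "smooth f \<Longrightarrow> smooth (\<lambda>x. cos (f x :: real))"
  by (simp add: smooth_def Ck_sin_cos)

lemmas smooth_intros = smooth_const smooth_add smooth_diff smooth_minus smooth_scaleR smooth_mult
  smooth_inner smooth_cross3 smooth_inverse smooth_norm smooth_sin smooth_cos smooth_vderiv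

section \<open>Smooth maps on the strip\<close>

lemma Du_eq_vderiv: "Du f t = vderiv (f t)"
  by (simp add: Du_def vderiv_def fun_eq_iff)

lemma pd_append: "pd tb ds (pd tb ds' f) = pd tb (ds @ ds') f"
proof (induction ds)
  case (Cons d ds) then show ?case by (cases d) auto
qed simp

lemma smooth_strip_pd: "smooth_strip tb f \<Longrightarrow> smooth_strip tb (pd tb ds f)"
  unfolding smooth_strip_def pd_append by (metis append_Cons)

lemma smooth_strip_Du: "smooth_strip tb f \<Longrightarrow> smooth_strip tb (Du f)"
  and smooth_strip_Dt: "smooth_strip tb f \<Longrightarrow> smooth_strip tb (Dt tb f)"
  using smooth_strip_pd[of tb f "[False]"] smooth_strip_pd[of tb f "[True]"] by simp_all

lemma smooth_strip_has_Dt: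
  "smooth_strip tb f \<Longrightarrow> t \<in> {0..<tb} \<Longrightarrow>
    ((\<lambda>t'. f t' u) has_vector_derivative Dt tb f t u) (at t within {0..<tb})"
  unfolding smooth_strip_def by (metis pd.simps(1,2))

lemma smooth_strip_slice:
  assumes "smooth_strip tb f" "t \<in> {0..<tb}"
  shows "smooth (f t)"
proof -
  have "Ck k (pd tb ds f t)" for k ds
  proof (induction k arbitrary: ds)
    case (Suc k)
    have "\<forall>u. pd tb ds f t differentiable (at u)"
      using assms unfolding smooth_strip_def by (metis differentiableI_vector)
    moreover have "vderiv (pd tb ds f t) = pd tb (False # ds) f t"
      by (simp add: Du_eq_vderiv)
    ultimately show ?case using Suc.IH[of "False # ds"] by simp
  qed simp
  from this[of _ "[]"] show ?thesis by (simp add: smooth_def)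
qed

lemma smooth_strip_continuous_slice:
  assumes "smooth_strip tb f" "{a..b} \<subseteq> {0..<tb}"
  shows "continuous_on {a..b} (\<lambda>s. pd tb ds f s u)"
proof -
  have "continuous_on ({0..<tb} \<times> UNIV) (\<lambda>(t, u). pd tb ds f t u)"
    using assms(1) by (simp add: smooth_strip_def)
  then have "continuous_on {a..b} (\<lambda>s. (\<lambda>(t, u). pd tb ds f t u) (s, u))"
    by (rule continuous_on_compose2) (use assms(2) in \<open>auto intro!: continuous_intros\<close>)
  then show ?thesis by simp
qed

lemma Du_eq_integral_Du_Dt:
  fixes f :: "real \<Rightarrow> real \<Rightarrow> 'a::euclidean_space"
  assumes sm: "smooth_strip tb f" and t1: "0 \<le> t1" "t1 < tb"
  shows "Du f t1 u = Du f 0 u + integral {0..t1} (\<lambda>s. Du (Dt tb f) s u)"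
proof -
  have sub: "{0..t1} \<subseteq> {0..<tb}" using t1 by auto
  have has_Du: "((\<lambda>v. g s v) has_vector_derivative Du g s v) (at v)"
    if "smooth_strip tb g" "s \<in> {0..<tb}" for g :: "real \<Rightarrow> real \<Rightarrow> 'a" and s v
    using that unfolding smooth_strip_def by (metis pd.simps(1,3))
  have ftc: "((\<lambda>s. Dt tb f s v) has_integral (f t1 v - f 0 v)) {0..t1}" for v
  proof (rule fundamental_theorem_of_calculus[OF t1(1)])
    fix s assume "s \<in> {0..t1}"
    then show "((\<lambda>s. f s v) has_vector_derivative Dt tb f s v) (at s within {0..t1})"
      using has_vector_derivative_within_subset[OF smooth_strip_has_Dt[OF sm] sub] sub by blast
  qed
  have cont: "continuous_on (UNIV \<times> cbox 0 t1) (\<lambda>(v, s). Du (Dt tb f) s v)"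
  proof -
    have "continuous_on ({0..<tb} \<times> UNIV) (\<lambda>(t, u). Du (Dt tb f) t u)"
      using sm unfolding smooth_strip_def by (metis pd.simps(1,2,3))
    then have "continuous_on (UNIV \<times> cbox 0 t1) (\<lambda>p. (\<lambda>(t, u). Du (Dt tb f) t u) (snd p, fst p))"
      by (rule continuous_on_compose2) (use sub in \<open>auto intro!: continuous_intros\<close>)
    then show ?thesis by (simp add: split_beta)
  qed
  have "((\<lambda>v. integral (cbox 0 t1) (\<lambda>s. Dt tb f s v)) has_vector_derivative
      integral (cbox 0 t1) (\<lambda>s. Du (Dt tb f) s u)) (at u within UNIV)"
  proof (rule leibniz_rule_vector_derivative[OF _ _ cont])
    fix v s assume "s \<in> cbox 0 t1"
    then show "((\<lambda>v. Dt tb f s v) has_vector_derivative Du (Dt tb f) s v) (at v within UNIV)"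
      using has_Du[OF smooth_strip_Dt[OF sm]] sub by auto
  next
    show "(\<lambda>s. Dt tb f s v) integrable_on cbox 0 t1" for v
      using ftc by (auto simp: has_integral_integrable)
  qed auto
  moreover have "(\<lambda>v. integral (cbox 0 t1) (\<lambda>s. Dt tb f s v)) = (\<lambda>v. f t1 v - f 0 v)"
    using ftc by (auto simp: integral_unique)
  ultimately have "((\<lambda>v. f t1 v - f 0 v) has_vector_derivative
      integral {0..t1} (\<lambda>s. Du (Dt tb f) s u)) (at u)"
    by simp
  moreover have "((\<lambda>v. f t1 v - f 0 v) has_vector_derivative Du f t1 u - Du f 0 u) (at u)"
    using t1 by (intro has_vector_derivative_diff has_Du[OF sm]) auto
  ultimately show ?thesis
    by (metis vector_derivative_unique_at add_diff_cancel_left' diff_add_cancel)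
qed

lemma Dt_Du_commute:
  fixes f :: "real \<Rightarrow> real \<Rightarrow> 'a::euclidean_space"
  assumes sm: "smooth_strip tb f" and t: "t \<in> {0..<tb}"
  shows "Dt tb (Du f) t u = Du (Dt tb f) t u"
proof -
  define b where "b = (t + tb) / 2"
  have b: "t < b" "b < tb" and tI: "t \<in> {0..b}" using t by (auto simp: b_def)
  have "((\<lambda>t1. Du f 0 u + integral {0..t1} (\<lambda>s. Du (Dt tb f) s u)) has_vector_derivative
      Du (Dt tb f) t u) (at t within {0..b})"
  proof -
    have "{0..b} \<subseteq> {0..<tb}" using b by auto
    from smooth_strip_continuous_slice[OF sm this, of "[False, True]"]
    have "continuous_on {0..b} (\<lambda>s. Du (Dt tb f) s u)" by simp
    from has_vector_derivative_add[OF has_vector_derivative_const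
        integral_has_vector_derivative[OF this tI]]
    show ?thesis by simp
  qed
  then have "((\<lambda>t1. Du f t1 u) has_vector_derivative Du (Dt tb f) t u) (at t within {0..b})"
  proof (rule has_vector_derivative_transform[OF tI, rotated])
    show "Du f t1 u = Du f 0 u + integral {0..t1} (\<lambda>s. Du (Dt tb f) s u)" if "t1 \<in> {0..b}" for t1
      using that b by (intro Du_eq_integral_Du_Dt[OF sm]) auto
  qed
  moreover have "((\<lambda>t1. Du f t1 u) has_vector_derivative Dt tb (Du f) t u) (at t within {0..b})"
    by (rule has_vector_derivative_within_subset[OF smooth_strip_has_Dt[OF smooth_strip_Du[OF sm] t]])
      (use b in auto)
  moreover have "at t within {0..b} \<noteq> bot"
    using b tI by (simp add: trivial_limit_within islimpt_Icc)
  ultimately show ?thesis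
    using vector_derivative_unique_within by blast
qed

section \<open>Arc-length derivative and the Frenet frame\<close>

lemma Ds_eq_vderiv: "Ds \<gamma> f t u = (1 / speed \<gamma> t u) *\<^sub>R vderiv (f t) u"
  by (simp add: Ds_def Du_eq_vderiv)

lemma Du_eq_speed_Ds: "speed \<gamma> t u \<noteq> 0 \<Longrightarrow> Du f t u = speed \<gamma> t u *\<^sub>R Ds \<gamma> f t u"
  by (simp add: Ds_def)

lemma Ds_slice_cong: "f t = h t \<Longrightarrow> Ds \<gamma> f t = Ds \<gamma> h t"
  by (intro ext) (simp add: Ds_eq_vderiv)

lemma Ds_add:
  "f t differentiable (at u) \<Longrightarrow> h t differentiable (at u) \<Longrightarrow>
    Ds \<gamma> (\<lambda>t u. f t u + h t u) t u = Ds \<gamma> f t u + Ds \<gamma> h t u"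
  by (simp add: Ds_eq_vderiv vderiv_add scaleR_add_right)

lemma Ds_bilinear:
  "bounded_bilinear bl \<Longrightarrow> f t differentiable (at u) \<Longrightarrow> h t differentiable (at u) \<Longrightarrow>
    Ds \<gamma> (\<lambda>t u. bl (f t u) (h t u)) t u = bl (f t u) (Ds \<gamma> h t u) + bl (Ds \<gamma> f t u) (h t u)"
  by (simp add: Ds_eq_vderiv vderiv_bilinear bounded_bilinear.scaleR_left bounded_bilinear.scaleR_right
      scaleR_add_right)

lemmas Ds_scaleR = Ds_bilinear[OF bounded_bilinear_scaleR]
lemmas Ds_mult = Ds_bilinear[OF bounded_bilinear_mult]
lemmas Ds_inner = Ds_bilinear[OF bounded_bilinear_inner]

lemma Ds_sin:
  fixes f :: "real \<Rightarrow> real \<Rightarrow> real"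
  shows "f t differentiable (at u) \<Longrightarrow> Ds \<gamma> (\<lambda>t u. sin (f t u)) t u = cos (f t u) * Ds \<gamma> f t u"
  by (simp add: Ds_eq_vderiv vderiv_real_chain[where f = "f t", OF DERIV_sin])

lemma Ds_cos:
  fixes f :: "real \<Rightarrow> real \<Rightarrow> real"
  shows "f t differentiable (at u) \<Longrightarrow> Ds \<gamma> (\<lambda>t u. cos (f t u)) t u = - sin (f t u) * Ds \<gamma> f t u"
  by (simp add: Ds_eq_vderiv vderiv_real_chain[where f = "f t", OF DERIV_cos])

lemma Ds_inner_const:
  assumes "smooth (f t)" "smooth (h t)" "\<And>u. f t u \<bullet> h t u = c"
  shows "f t u \<bullet> Ds \<gamma> h t u + Ds \<gamma> f t u \<bullet> h t u = 0"
proof -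
  have "f t u \<bullet> vderiv (h t) u + vderiv (f t) u \<bullet> h t u = 0"
    unfolding vderiv_def
    by (rule vector_derivative_inner_const_within) (use assms smooth_differentiable in auto)
  then show ?thesis
    by (simp add: Ds_eq_vderiv flip: add_divide_distrib)
qed

lemma orthonormal_cross3_expansion:
  fixes T N x :: "real^3"
  assumes TT: "T \<bullet> T = 1" and NN: "N \<bullet> N = 1" and TN: "T \<bullet> N = 0"
  shows "x = (x \<bullet> T) *\<^sub>R T + (x \<bullet> N) *\<^sub>R N + (x \<bullet> cross3 T N) *\<^sub>R cross3 T N"
proof -
  define B where "B = cross3 T N"
  have BB: "B \<bullet> B = 1" using dot_cross[of T N T N] assms by (simp add: B_def inner_commute)
  have BT: "cross3 B T = N" and BN: "cross3 B N = - T"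
    using Lagrange[of T T N] Lagrange[of N T N] assms
    by (simp_all add: B_def cross_skew[of "cross3 T N"] inner_commute)
  have "cross3 B (cross3 x B) = x - (x \<bullet> B) *\<^sub>R B"
    using Lagrange[of B x B] BB by (simp add: inner_commute)
  moreover have "cross3 B (cross3 x B) = (x \<bullet> T) *\<^sub>R T + (x \<bullet> N) *\<^sub>R N"
    using Lagrange[of x T N] BT BN
    by (simp add: B_def cross_mult_right Cross3.right_diff_distrib flip: B_def)
  ultimately show ?thesis by (simp add: B_def algebra_simps)
qed

locale frenet_curve =
  fixes \<gamma> :: "real \<Rightarrow> real \<Rightarrow> real^3" and t :: real
  assumes smooth_curve: "smooth (\<gamma> t)"
    and speed_pos: "0 < speed \<gamma> t u"
    and curvature_pos: "0 < curvature \<gamma> t u"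
begin

lemma speed_eq: "speed \<gamma> t = (\<lambda>u. norm (vderiv (\<gamma> t) u))"
  by (simp add: speed_def Du_eq_vderiv fun_eq_iff)

lemma speed_nonzero: "speed \<gamma> t u \<noteq> 0"
  using speed_pos[of u] by simp

lemma curvature_nonzero: "curvature \<gamma> t u \<noteq> 0"
  using curvature_pos[of u] by simp

lemma smooth_speed: "smooth (speed \<gamma> t)"
  using speed_nonzero unfolding speed_eq
  by (intro smooth_intros smooth_curve) (simp add: speed_eq)

lemma smooth_Ds: "smooth (f t) \<Longrightarrow> smooth (Ds \<gamma> f t)"
proof -
  assume "smooth (f t)"
  moreover have "Ds \<gamma> f t = (\<lambda>u. inverse (speed \<gamma> t u) *\<^sub>R vderiv (f t) u)"
    by (simp add: fun_eq_iff Ds_eq_vderiv divide_inverse)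
  ultimately show ?thesis
    using speed_nonzero by (simp add: smooth_intros smooth_speed)
qed

lemma smooth_tangent: "smooth (tangent \<gamma> t)"
  unfolding tangent_def by (rule smooth_Ds[where f = \<gamma>, OF smooth_curve])

lemma smooth_curvature: "smooth (curvature \<gamma> t)"
proof -
  have "curvature \<gamma> t = (\<lambda>u. norm (Ds \<gamma> (tangent \<gamma>) t u))"
    by (simp add: curvature_def fun_eq_iff)
  then show ?thesis
    using curvature_nonzero by (simp add: smooth_norm smooth_Ds smooth_tangent curvature_def)
qed

lemma smooth_normal: "smooth (normal \<gamma> t)"
proof -
  have "normal \<gamma> t = (\<lambda>u. inverse (curvature \<gamma> t u) *\<^sub>R Ds \<gamma> (tangent \<gamma>) t u)"
    by (simp add: normal_def fun_eq_iff divide_inverse)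
  then show ?thesis
    using curvature_nonzero by (simp add: smooth_intros smooth_curvature smooth_Ds smooth_tangent)
qed

lemma smooth_binormal: "smooth (binormal \<gamma> t)"
  using smooth_cross3[OF smooth_tangent smooth_normal] by (simp add: binormal_def[abs_def])

lemma smooth_torsion: "smooth (torsion \<gamma> t)"
  using smooth_inner[OF smooth_Ds[where f = "normal \<gamma>", OF smooth_normal] smooth_binormal]
  by (simp add: torsion_def[abs_def])

lemmas smooth_frenet = smooth_curve smooth_speed smooth_tangent smooth_curvature smooth_normal
  smooth_binormal smooth_torsion

lemma Du_eq_speed_tangent: "Du \<gamma> t u = speed \<gamma> t u *\<^sub>R tangent \<gamma> t u"
  using speed_nonzero by (simp add: tangent_def Ds_def)

lemma tangent_sgn: "tangent \<gamma> t u = sgn (Du \<gamma> t u)"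
  using speed_pos[of u] by (simp add: tangent_def Ds_def sgn_div_norm speed_def divide_inverse_commute)

lemma tangent_unit: "tangent \<gamma> t u \<bullet> tangent \<gamma> t u = 1"
  using speed_nonzero by (simp add: tangent_def Ds_def speed_def dot_square_norm power2_eq_square)

lemma Ds_tangent: "Ds \<gamma> (tangent \<gamma>) t u = curvature \<gamma> t u *\<^sub>R normal \<gamma> t u"
  using curvature_nonzero by (simp add: normal_def)

lemma normal_unit: "normal \<gamma> t u \<bullet> normal \<gamma> t u = 1"
  using curvature_nonzero by (simp add: normal_def curvature_def dot_square_norm power2_eq_square)

lemma tangent_normal: "tangent \<gamma> t u \<bullet> normal \<gamma> t u = 0"
proof -
  have "tangent \<gamma> t u \<bullet> Ds \<gamma> (tangent \<gamma>) t u + Ds \<gamma> (tangent \<gamma>) t u \<bullet> tangent \<gamma> t u = 0"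
    by (rule Ds_inner_const[where f = "tangent \<gamma>" and h = "tangent \<gamma>",
          OF smooth_tangent smooth_tangent tangent_unit])
  then show ?thesis
    using curvature_nonzero by (simp add: Ds_tangent inner_commute)
qed

lemma binormal_unit: "binormal \<gamma> t u \<bullet> binormal \<gamma> t u = 1"
  using dot_cross[of "tangent \<gamma> t u" "normal \<gamma> t u"] tangent_unit normal_unit tangent_normal
  by (simp add: binormal_def inner_commute)

lemma tangent_binormal: "tangent \<gamma> t u \<bullet> binormal \<gamma> t u = 0"
  and normal_binormal: "normal \<gamma> t u \<bullet> binormal \<gamma> t u = 0"
  by (simp_all add: binormal_def dot_cross_self)

lemma normal_tangent: "normal \<gamma> t u \<bullet> tangent \<gamma> t u = 0"
  and binormal_tangent: "binormal \<gamma> t u \<bullet> tangent \<gamma> t u = 0"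
  and binormal_normal: "binormal \<gamma> t u \<bullet> normal \<gamma> t u = 0"
  using tangent_normal tangent_binormal normal_binormal by (simp_all add: inner_commute)

lemmas frenet_frame = tangent_unit normal_unit binormal_unit tangent_normal tangent_binormal
  normal_binormal normal_tangent binormal_tangent binormal_normal

lemma frenet_expansion:
  "x = (x \<bullet> tangent \<gamma> t u) *\<^sub>R tangent \<gamma> t u + (x \<bullet> normal \<gamma> t u) *\<^sub>R normal \<gamma> t u
     + (x \<bullet> binormal \<gamma> t u) *\<^sub>R binormal \<gamma> t u"
  unfolding binormal_def
  by (rule orthonormal_cross3_expansion[OF tangent_unit normal_unit tangent_normal])

lemma Ds_normal:
  "Ds \<gamma> (normal \<gamma>) t u = - curvature \<gamma> t u *\<^sub>R tangent \<gamma> t u + torsion \<gamma> t u *\<^sub>R binormal \<gamma> t u"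
proof -
  have "normal \<gamma> t u \<bullet> Ds \<gamma> (normal \<gamma>) t u + Ds \<gamma> (normal \<gamma>) t u \<bullet> normal \<gamma> t u = 0"
    by (rule Ds_inner_const[where f = "normal \<gamma>" and h = "normal \<gamma>",
          OF smooth_normal smooth_normal normal_unit])
  then have N: "Ds \<gamma> (normal \<gamma>) t u \<bullet> normal \<gamma> t u = 0"
    by (simp add: inner_commute)
  have "tangent \<gamma> t u \<bullet> Ds \<gamma> (normal \<gamma>) t u + Ds \<gamma> (tangent \<gamma>) t u \<bullet> normal \<gamma> t u = 0"
    by (rule Ds_inner_const[where f = "tangent \<gamma>" and h = "normal \<gamma>",
          OF smooth_tangent smooth_normal tangent_normal])
  then have T: "Ds \<gamma> (normal \<gamma>) t u \<bullet> tangent \<gamma> t u = - curvature \<gamma> t u"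
    using normal_unit[of u] by (simp add: Ds_tangent inner_commute eq_neg_iff_add_eq_0)
  have B: "Ds \<gamma> (normal \<gamma>) t u \<bullet> binormal \<gamma> t u = torsion \<gamma> t u"
    by (simp add: torsion_def)
  show ?thesis
    by (subst frenet_expansion[of _ u]) (simp add: N T B)
qed

lemma Ds_binormal: "Ds \<gamma> (binormal \<gamma>) t u = - torsion \<gamma> t u *\<^sub>R normal \<gamma> t u"
proof -
  have "binormal \<gamma> t u \<bullet> Ds \<gamma> (binormal \<gamma>) t u + Ds \<gamma> (binormal \<gamma>) t u \<bullet> binormal \<gamma> t u = 0"
    by (rule Ds_inner_const[where f = "binormal \<gamma>" and h = "binormal \<gamma>",
          OF smooth_binormal smooth_binormal binormal_unit])
  then have B: "Ds \<gamma> (binormal \<gamma>) t u \<bullet> binormal \<gamma> t u = 0"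
    by (simp add: inner_commute)
  have "tangent \<gamma> t u \<bullet> Ds \<gamma> (binormal \<gamma>) t u + Ds \<gamma> (tangent \<gamma>) t u \<bullet> binormal \<gamma> t u = 0"
    by (rule Ds_inner_const[where f = "tangent \<gamma>" and h = "binormal \<gamma>",
          OF smooth_tangent smooth_binormal tangent_binormal])
  then have T: "Ds \<gamma> (binormal \<gamma>) t u \<bullet> tangent \<gamma> t u = 0"
    using normal_binormal[of u] by (simp add: Ds_tangent inner_commute)
  have "normal \<gamma> t u \<bullet> Ds \<gamma> (binormal \<gamma>) t u + Ds \<gamma> (normal \<gamma>) t u \<bullet> binormal \<gamma> t u = 0"
    by (rule Ds_inner_const[where f = "normal \<gamma>" and h = "binormal \<gamma>",
          OF smooth_normal smooth_binormal normal_binormal])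
  then have N: "Ds \<gamma> (binormal \<gamma>) t u \<bullet> normal \<gamma> t u = - torsion \<gamma> t u"
    by (simp add: torsion_def inner_commute eq_neg_iff_add_eq_0)
  show ?thesis
    by (subst frenet_expansion[of _ u]) (simp add: N T B)
qed

lemma vderiv_speed: "vderiv (speed \<gamma> t) u = (Du \<gamma> t u \<bullet> Du (Du \<gamma>) t u) / speed \<gamma> t u"
proof -
  have "Du \<gamma> t u \<noteq> 0" using speed_nonzero[of u] by (simp add: speed_def)
  then have "vderiv (speed \<gamma> t) u = sgn (Du \<gamma> t u) \<bullet> Du (Du \<gamma>) t u"
    unfolding speed_eq
    by (simp add: vderiv_norm smooth_differentiable smooth_vderiv smooth_curve Du_eq_vderiv)
  then show ?thesis by (simp add: sgn_div_norm speed_def field_simps)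
qed

lemma Ds_Ds:
  assumes "smooth (f t)"
  shows "Ds \<gamma> (Ds \<gamma> f) t u = (1 / (speed \<gamma> t u)\<^sup>2) *\<^sub>R
    (Du (Du f) t u - ((Du \<gamma> t u \<bullet> Du (Du \<gamma>) t u) / (speed \<gamma> t u)\<^sup>2) *\<^sub>R Du f t u)"
proof -
  let ?g = "speed \<gamma> t"
  have "Ds \<gamma> f t = (\<lambda>u. inverse (?g u) *\<^sub>R vderiv (f t) u)"
    by (simp add: fun_eq_iff Ds_eq_vderiv divide_inverse)
  then have "Ds \<gamma> (Ds \<gamma> f) t u = inverse (?g u) *\<^sub>R
      (inverse (?g u) *\<^sub>R vderiv (vderiv (f t)) u + vderiv (\<lambda>u. inverse (?g u)) u *\<^sub>R vderiv (f t) u)"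
    using assms speed_nonzero
    by (simp add: Ds_eq_vderiv vderiv_bilinear[OF bounded_bilinear_scaleR] smooth_differentiable
        smooth_intros smooth_speed divide_inverse)
  also have "vderiv (\<lambda>u. inverse (?g u)) u = - (inverse (?g u) * inverse (?g u)) * vderiv ?g u"
    using speed_nonzero[of u]
    by (simp add: vderiv_real_chain[where f = ?g, OF DERIV_inverse] smooth_differentiable smooth_speed)
  finally show ?thesis
    using speed_nonzero[of u]
    by (simp add: vderiv_speed Du_eq_vderiv field_simps power2_eq_square scaleR_diff_right)
qed

lemma Du_Du_frenet: "Du (Du \<gamma>) t u = ((Du \<gamma> t u \<bullet> Du (Du \<gamma>) t u) / (speed \<gamma> t u)\<^sup>2) *\<^sub>R Du \<gamma> t u
    + ((speed \<gamma> t u)\<^sup>2 * curvature \<gamma> t u) *\<^sub>R normal \<gamma> t u"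
proof -
  have "Ds \<gamma> (tangent \<gamma>) t u = (1 / (speed \<gamma> t u)\<^sup>2) *\<^sub>R
    (Du (Du \<gamma>) t u - ((Du \<gamma> t u \<bullet> Du (Du \<gamma>) t u) / (speed \<gamma> t u)\<^sup>2) *\<^sub>R Du \<gamma> t u)"
    unfolding tangent_def by (rule Ds_Ds[where f = \<gamma>, OF smooth_curve])
  then have "Du (Du \<gamma>) t u = (speed \<gamma> t u)\<^sup>2 *\<^sub>R (curvature \<gamma> t u *\<^sub>R normal \<gamma> t u)
      + ((Du \<gamma> t u \<bullet> Du (Du \<gamma>) t u) / (speed \<gamma> t u)\<^sup>2) *\<^sub>R Du \<gamma> t u"
    using speed_nonzero[of u] by (simp add: Ds_tangent)
  then show ?thesis by (simp add: add.commute)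
qed

lemma Ds_tangent_rejection:
  "Ds \<gamma> (tangent \<gamma>) t u = (1 / (speed \<gamma> t u)\<^sup>2) *\<^sub>R rejection (Du \<gamma> t u) (Du (Du \<gamma>) t u)"
  unfolding tangent_def rejection_def Ds_Ds[where f = \<gamma>, OF smooth_curve]
  by (simp add: speed_def power2_norm_eq_inner)

lemma curvature_rejection:
  "curvature \<gamma> t u = norm (rejection (Du \<gamma> t u) (Du (Du \<gamma>) t u)) / (Du \<gamma> t u \<bullet> Du \<gamma> t u)"
  by (simp add: curvature_def Ds_tangent_rejection speed_def power2_norm_eq_inner)

lemma normal_rejection: "normal \<gamma> t u = sgn (rejection (Du \<gamma> t u) (Du (Du \<gamma>) t u))"
  using speed_nonzero[of u]
  by (simp add: normal_def curvature_def Ds_tangent_rejection sgn_div_norm speed_def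
      power2_norm_eq_inner inverse_eq_divide)

lemmas smooth_simps = smooth_differentiable smooth_intros smooth_frenet smooth_Ds

lemma Ds_normal_field:
  assumes "smooth (p t)" "smooth (q t)"
  shows "Ds \<gamma> (\<lambda>t u. p t u *\<^sub>R normal \<gamma> t u + q t u *\<^sub>R binormal \<gamma> t u) t u =
    (Ds \<gamma> p t u - torsion \<gamma> t u * q t u) *\<^sub>R normal \<gamma> t u
    + (Ds \<gamma> q t u + torsion \<gamma> t u * p t u) *\<^sub>R binormal \<gamma> t u
    - (curvature \<gamma> t u * p t u) *\<^sub>R tangent \<gamma> t u"
  using assms
  by (simp add: Ds_add Ds_scaleR Ds_normal Ds_binormal smooth_simps algebra_simps)

lemma Ds_Ds_normal_field_binormal:
  assumes p: "smooth (p t)" and q: "smooth (q t)"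
  defines "V \<equiv> \<lambda>t u. p t u *\<^sub>R normal \<gamma> t u + q t u *\<^sub>R binormal \<gamma> t u"
  shows "Ds \<gamma> (Ds \<gamma> V) t u \<bullet> binormal \<gamma> t u =
    Ds \<gamma> (\<lambda>t u. Ds \<gamma> q t u + torsion \<gamma> t u * p t u) t u
    + torsion \<gamma> t u * (Ds \<gamma> p t u - torsion \<gamma> t u * q t u)"
proof -
  have smooth_V: "smooth (V t)"
    using p q by (simp add: V_def smooth_simps)
  have "Ds \<gamma> (\<lambda>t u. Ds \<gamma> V t u \<bullet> binormal \<gamma> t u) t u =
      Ds \<gamma> V t u \<bullet> Ds \<gamma> (binormal \<gamma>) t u + Ds \<gamma> (Ds \<gamma> V) t u \<bullet> binormal \<gamma> t u"
    using smooth_V by (simp add: Ds_inner smooth_simps)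
  moreover have "Ds \<gamma> (\<lambda>t u. Ds \<gamma> V t u \<bullet> binormal \<gamma> t u) t =
      Ds \<gamma> (\<lambda>t u. Ds \<gamma> q t u + torsion \<gamma> t u * p t u) t"
    by (rule Ds_slice_cong)
      (simp add: fun_eq_iff V_def Ds_normal_field p q frenet_frame inner_diff_left inner_add_left)
  moreover have "Ds \<gamma> V t u \<bullet> Ds \<gamma> (binormal \<gamma>) t u =
      - torsion \<gamma> t u * (Ds \<gamma> p t u - torsion \<gamma> t u * q t u)"
    by (simp add: V_def Ds_normal_field p q Ds_binormal frenet_frame inner_diff_left inner_add_left)
  ultimately show ?thesis by simp
qed

end

section \<open>Framed curves\<close>

definition nu_perp :: "(real \<Rightarrow> real \<Rightarrow> real^3) \<Rightarrow> (real \<Rightarrow> real \<Rightarrow> real) \<Rightarrow> real \<Rightarrow> real \<Rightarrow> real^3" where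
  "nu_perp \<gamma> \<theta> t u = sin (\<theta> t u) *\<^sub>R normal \<gamma> t u - cos (\<theta> t u) *\<^sub>R binormal \<gamma> t u"

locale framed_curve = frenet_curve +
  fixes \<theta> :: "real \<Rightarrow> real \<Rightarrow> real"
  assumes smooth_angle: "smooth (\<theta> t)"
begin

lemma psi1_eq: "psi1 \<gamma> \<theta> = (\<lambda>t u. curvature \<gamma> t u * cos (\<theta> t u))"
  and psi2_eq: "psi2 \<gamma> \<theta> = (\<lambda>t u. curvature \<gamma> t u * sin (\<theta> t u))"
  and psi3_eq: "psi3 \<gamma> \<theta> = (\<lambda>t u. torsion \<gamma> t u + Ds \<gamma> \<theta> t u)"
  by (simp_all add: fun_eq_iff psi1_def psi2_def psi3_def)

lemma velocity_eq: "(\<lambda>t u. curvature \<gamma> t u *\<^sub>R nu \<gamma> \<theta> t u) =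
    (\<lambda>t u. psi1 \<gamma> \<theta> t u *\<^sub>R normal \<gamma> t u + psi2 \<gamma> \<theta> t u *\<^sub>R binormal \<gamma> t u)"
  by (simp add: fun_eq_iff nu_def psi1_def psi2_def scaleR_add_right)

lemma smooth_psi: "smooth (psi1 \<gamma> \<theta> t)" "smooth (psi2 \<gamma> \<theta> t)" "smooth (psi3 \<gamma> \<theta> t)"
  using smooth_angle by (simp_all add: psi1_eq psi2_eq psi3_eq smooth_simps)

lemma Ds_psi1: "Ds \<gamma> (psi1 \<gamma> \<theta>) t u =
    Ds \<gamma> (curvature \<gamma>) t u * cos (\<theta> t u) - curvature \<gamma> t u * sin (\<theta> t u) * Ds \<gamma> \<theta> t u"
  and Ds_psi2: "Ds \<gamma> (psi2 \<gamma> \<theta>) t u =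
    Ds \<gamma> (curvature \<gamma>) t u * sin (\<theta> t u) + curvature \<gamma> t u * cos (\<theta> t u) * Ds \<gamma> \<theta> t u"
  using smooth_angle by (simp_all add: psi1_eq psi2_eq Ds_mult Ds_sin Ds_cos smooth_simps)

lemma nu_perp_unit: "nu_perp \<gamma> \<theta> t u \<bullet> nu_perp \<gamma> \<theta> t u = 1"
  and nu_nu_perp: "nu \<gamma> \<theta> t u \<bullet> nu_perp \<gamma> \<theta> t u = 0"
  and tangent_nu_perp: "tangent \<gamma> t u \<bullet> nu_perp \<gamma> \<theta> t u = 0"
  by (simp_all add: nu_perp_def nu_def frenet_frame inner_diff_left inner_add_left inner_diff_right
      inner_add_right algebra_simps flip: power2_eq_square)

lemma cross3_nu_tangent: "cross3 (nu \<gamma> \<theta> t u) (tangent \<gamma> t u) = nu_perp \<gamma> \<theta> t u"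
proof -
  have "cross3 (binormal \<gamma> t u) (tangent \<gamma> t u) = normal \<gamma> t u"
    using Lagrange[of "tangent \<gamma> t u" "tangent \<gamma> t u" "normal \<gamma> t u"] frenet_frame[of u]
    by (simp add: binormal_def cross_skew[of "cross3 _ _"])
  then show ?thesis
    by (simp add: nu_def nu_perp_def cross_add_left cross_mult_left binormal_def
        cross_skew[of "normal \<gamma> t u"])
qed

lemma Ds_velocity_inner:
  "Ds \<gamma> (\<lambda>t u. curvature \<gamma> t u *\<^sub>R nu \<gamma> \<theta> t u) t u \<bullet> nu_perp \<gamma> \<theta> t u
    = - curvature \<gamma> t u * psi3 \<gamma> \<theta> t u"
  unfolding velocity_eq nu_perp_def Ds_psi1 Ds_psi2
    Ds_normal_field[where p = "psi1 \<gamma> \<theta>" and q = "psi2 \<gamma> \<theta>", OF smooth_psi(1,2)]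
  by (simp add: psi3_def psi1_def psi2_def frenet_frame inner_diff_left inner_add_left
      inner_diff_right inner_add_right algebra_simps)
    (use sin_cos_squared_add3[of "\<theta> t u"] in algebra)

lemma Ds_Ds_velocity_binormal:
  "Ds \<gamma> (Ds \<gamma> (\<lambda>t u. curvature \<gamma> t u *\<^sub>R nu \<gamma> \<theta> t u)) t u \<bullet> binormal \<gamma> t u =
    (curvature \<gamma> t u * Ds \<gamma> (psi3 \<gamma> \<theta>) t u + 2 * Ds \<gamma> (curvature \<gamma>) t u * psi3 \<gamma> \<theta> t u)
      * cos (\<theta> t u)
    + (Ds \<gamma> (Ds \<gamma> (curvature \<gamma>)) t u - curvature \<gamma> t u * (psi3 \<gamma> \<theta> t u)\<^sup>2) * sin (\<theta> t u)"
proof -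
  have "Ds \<gamma> (\<lambda>t u. Ds \<gamma> (psi2 \<gamma> \<theta>) t u + torsion \<gamma> t u * psi1 \<gamma> \<theta> t u) t =
      Ds \<gamma> (\<lambda>t u. Ds \<gamma> (curvature \<gamma>) t u * sin (\<theta> t u)
        + curvature \<gamma> t u * cos (\<theta> t u) * Ds \<gamma> \<theta> t u
        + torsion \<gamma> t u * (curvature \<gamma> t u * cos (\<theta> t u))) t"
    by (rule Ds_slice_cong) (simp add: fun_eq_iff Ds_psi2 psi1_def)
  moreover have "Ds \<gamma> (psi3 \<gamma> \<theta>) t u = Ds \<gamma> (torsion \<gamma>) t u + Ds \<gamma> (Ds \<gamma> \<theta>) t u"
    using smooth_angle by (simp add: psi3_eq Ds_add smooth_simps)
  ultimately show ?thesis
    unfolding velocity_eq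
      Ds_Ds_normal_field_binormal[where p = "psi1 \<gamma> \<theta>" and q = "psi2 \<gamma> \<theta>", OF smooth_psi(1,2)]
    using smooth_angle
    by (simp add: Ds_add Ds_mult Ds_sin Ds_cos smooth_simps Ds_psi1 psi1_def psi2_def psi3_def
        algebra_simps power2_eq_square)
qed

end

section \<open>The trajectory surface of a framed curvature flow\<close>

locale framed_curvature_flow =
  fixes tb :: real and \<gamma> :: "real \<Rightarrow> real \<Rightarrow> real^3" and \<theta> :: "real \<Rightarrow> real \<Rightarrow> real"
  assumes tb_pos: "0 < tb"
    and smooth_strip_curve: "smooth_strip tb \<gamma>"
    and smooth_strip_angle: "smooth_strip tb \<theta>"
    and speed_pos: "t \<in> {0..<tb} \<Longrightarrow> 0 < speed \<gamma> t u"
    and curvature_pos: "t \<in> {0..<tb} \<Longrightarrow> 0 < curvature \<gamma> t u"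
    and velocity: "t \<in> {0..<tb} \<Longrightarrow> Dt tb \<gamma> t u = curvature \<gamma> t u *\<^sub>R nu \<gamma> \<theta> t u"
begin

lemma framed_curve_slice: "t \<in> {0..<tb} \<Longrightarrow> framed_curve \<gamma> t \<theta>"
  by unfold_locales
    (use smooth_strip_slice[OF smooth_strip_curve] smooth_strip_slice[OF smooth_strip_angle]
      speed_pos curvature_pos in auto)

lemma frenet_curve_slice: "t \<in> {0..<tb} \<Longrightarrow> frenet_curve \<gamma> t"
  using framed_curve_slice framed_curve.axioms(1) by blast

context
  fixes t u :: real assumes t: "t \<in> {0..<tb}"
begin

lemma nontrivial_at_strip: "at t within {0..<tb} \<noteq> bot"
  using t tb_pos by (simp add: trivial_limit_within islimpt_Ico)

lemma has_Dt_Du: "((\<lambda>t'. Du \<gamma> t' u) has_vector_derivative Du (Dt tb \<gamma>) t u) (at t within {0..<tb})"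
  using smooth_strip_has_Dt[OF smooth_strip_Du[OF smooth_strip_curve] t]
  by (simp add: Dt_Du_commute[OF smooth_strip_curve t])

lemma has_Dt_Du_Du:
  "((\<lambda>t'. Du (Du \<gamma>) t' u) has_vector_derivative Du (Du (Dt tb \<gamma>)) t u) (at t within {0..<tb})"
proof -
  have "Dt tb (Du \<gamma>) t = Du (Dt tb \<gamma>) t"
    by (simp add: fun_eq_iff Dt_Du_commute[OF smooth_strip_curve t])
  then have "Dt tb (Du (Du \<gamma>)) t u = Du (Du (Dt tb \<gamma>)) t u"
    by (simp add: Dt_Du_commute[OF smooth_strip_Du[OF smooth_strip_curve] t] Du_eq_vderiv)
  with smooth_strip_has_Dt[OF smooth_strip_Du[OF smooth_strip_Du[OF smooth_strip_curve]] t, of u]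
  show ?thesis by simp
qed

lemma Du_nonzero: "Du \<gamma> t u \<noteq> 0"
  using speed_pos[OF t, of u] by (auto simp: speed_def)

lemma rejection_nonzero: "rejection (Du \<gamma> t u) (Du (Du \<gamma>) t u) \<noteq> 0"
  using curvature_pos[OF t, of u] frenet_curve.curvature_rejection[OF frenet_curve_slice[OF t]] by auto

lemma differentiable_Du_along_flow:
  "(\<lambda>t'. Du \<gamma> t' u) differentiable (at t within {0..<tb})"
  "(\<lambda>t'. Du (Du \<gamma>) t' u) differentiable (at t within {0..<tb})"
  using has_Dt_Du has_Dt_Du_Du by (auto intro: differentiableI_vector)

lemma Ds_Dt_slice: "Ds \<gamma> (Dt tb \<gamma>) t = Ds \<gamma> (\<lambda>t u. curvature \<gamma> t u *\<^sub>R nu \<gamma> \<theta> t u) t"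
  by (rule Ds_slice_cong) (simp add: fun_eq_iff velocity[OF t])

lemma differentiable_along_flow:
  shows "(\<lambda>t'. normal \<gamma> t' u) differentiable (at t within {0..<tb})"
    and "(\<lambda>t'. binormal \<gamma> t' u) differentiable (at t within {0..<tb})"
    and "(\<lambda>t'. curvature \<gamma> t' u) differentiable (at t within {0..<tb})"
    and "(\<lambda>t'. \<theta> t' u) differentiable (at t within {0..<tb})"
proof -
  let ?x1 = "\<lambda>t'. Du \<gamma> t' u" and ?x2 = "\<lambda>t'. Du (Du \<gamma>) t' u"
  let ?w = "\<lambda>t'. rejection (?x1 t') (?x2 t')"
  note dx = differentiable_Du_along_flow
  have dw: "?w differentiable (at t within {0..<tb})"
    by (rule differentiable_rejection_within[OF Du_nonzero dx])
  have dN: "(\<lambda>t'. sgn (?w t')) differentiable (at t within {0..<tb})"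
    by (rule differentiable_sgn_within[OF rejection_nonzero dw])
  have dT: "(\<lambda>t'. sgn (?x1 t')) differentiable (at t within {0..<tb})"
    by (rule differentiable_sgn_within[OF Du_nonzero dx(1)])
  have dk: "(\<lambda>t'. norm (?w t') / (?x1 t' \<bullet> ?x1 t')) differentiable (at t within {0..<tb})"
    using Du_nonzero dx
    by (intro differentiable_divide differentiable_norm_within[OF rejection_nonzero dw]
        differentiable_inner) auto
  have on_strip: "normal \<gamma> t' u = sgn (?w t')" "binormal \<gamma> t' u = cross3 (sgn (?x1 t')) (sgn (?w t'))"
      "curvature \<gamma> t' u = norm (?w t') / (?x1 t' \<bullet> ?x1 t')"
    if "t' \<in> {0..<tb}" for t'
    using frenet_curve.normal_rejection[OF frenet_curve_slice[OF that]]
      frenet_curve.tangent_sgn[OF frenet_curve_slice[OF that]]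
      frenet_curve.curvature_rejection[OF frenet_curve_slice[OF that]]
    by (simp_all add: binormal_def)
  show "(\<lambda>t'. normal \<gamma> t' u) differentiable (at t within {0..<tb})"
    by (rule differentiable_transform_within[OF dN zero_less_one t]) (simp add: on_strip)
  show "(\<lambda>t'. binormal \<gamma> t' u) differentiable (at t within {0..<tb})"
    by (rule differentiable_transform_within
        [OF differentiable_bilinear[OF bounded_bilinear_cross3 dT dN] zero_less_one t])
      (simp add: on_strip)
  show "(\<lambda>t'. curvature \<gamma> t' u) differentiable (at t within {0..<tb})"
    by (rule differentiable_transform_within[OF dk zero_less_one t]) (simp add: on_strip)
  show "(\<lambda>t'. \<theta> t' u) differentiable (at t within {0..<tb})"
    using smooth_strip_has_Dt[OF smooth_strip_angle t] by (rule differentiableI_vector)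
qed

lemma Dt_normal_binormal:
  "Dt tb (normal \<gamma>) t u \<bullet> binormal \<gamma> t u =
    Ds \<gamma> (Ds \<gamma> (Dt tb \<gamma>)) t u \<bullet> binormal \<gamma> t u / curvature \<gamma> t u"
proof -
  interpret frenet_curve \<gamma> t by (rule frenet_curve_slice[OF t])
  let ?x1 = "\<lambda>t'. Du \<gamma> t' u" and ?x2 = "\<lambda>t'. Du (Du \<gamma>) t' u"
  let ?w = "\<lambda>t'. rejection (?x1 t') (?x2 t')"
  let ?D = "\<lambda>f. vector_derivative f (at t within {0..<tb})"
  let ?B = "binormal \<gamma> t u"
  note nb = nontrivial_at_strip and dx = differentiable_Du_along_flow
  have x1B: "?x1 t \<bullet> ?B = 0"
    by (simp add: Du_eq_speed_tangent tangent_binormal)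
  have "?w t = (speed \<gamma> t u)\<^sup>2 *\<^sub>R (curvature \<gamma> t u *\<^sub>R normal \<gamma> t u)"
    using Ds_tangent_rejection[of u] speed_nonzero[of u] by (simp add: Ds_tangent)
  then have wB: "?w t \<bullet> ?B = 0"
    by (simp add: normal_binormal)
  have "Dt tb (normal \<gamma>) t u = ?D (\<lambda>t'. sgn (?w t'))"
    unfolding Dt_def
    by (rule vector_derivative_cong_eq)
      (use t frenet_curve.normal_rejection[OF frenet_curve_slice] in \<open>auto intro: always_eventually\<close>)
  then have "Dt tb (normal \<gamma>) t u \<bullet> ?B =
      (?D ?x2 \<bullet> ?B - (?x1 t \<bullet> ?x2 t) / (?x1 t \<bullet> ?x1 t) * (?D ?x1 \<bullet> ?B)) / norm (?w t)"
    by (simp add: vector_derivative_sgn_inner_orthogonal[OF nb rejection_nonzero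
          differentiable_rejection_within[OF Du_nonzero dx] wB]
        vector_derivative_rejection_inner_orthogonal[OF nb Du_nonzero dx x1B])
  moreover have "?D ?x1 = Du (Dt tb \<gamma>) t u" and "?D ?x2 = Du (Du (Dt tb \<gamma>)) t u"
    using vector_derivative_within[OF nb has_Dt_Du] vector_derivative_within[OF nb has_Dt_Du_Du]
    by auto
  moreover have "Ds \<gamma> (Ds \<gamma> (Dt tb \<gamma>)) t u \<bullet> ?B = (Du (Du (Dt tb \<gamma>)) t u \<bullet> ?B
      - (?x1 t \<bullet> ?x2 t) / (?x1 t \<bullet> ?x1 t) * (Du (Dt tb \<gamma>) t u \<bullet> ?B)) / (?x1 t \<bullet> ?x1 t)"
    using Ds_Ds[of "Dt tb \<gamma>" u] smooth_strip_slice[OF smooth_strip_Dt[OF smooth_strip_curve] t]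
    by (simp add: speed_def power2_norm_eq_inner inner_diff_left divide_inverse_commute)
  moreover have "norm (?w t) = curvature \<gamma> t u * (?x1 t \<bullet> ?x1 t)"
    using curvature_rejection[of u] Du_nonzero by simp
  ultimately show ?thesis
    using curvature_nonzero[of u] by simp
qed

lemma Dt_normal_binormal_framed:
  "Dt tb (normal \<gamma>) t u \<bullet> binormal \<gamma> t u =
    ((curvature \<gamma> t u * Ds \<gamma> (psi3 \<gamma> \<theta>) t u + 2 * Ds \<gamma> (curvature \<gamma>) t u * psi3 \<gamma> \<theta> t u)
        * cos (\<theta> t u)
      + (Ds \<gamma> (Ds \<gamma> (curvature \<gamma>)) t u - curvature \<gamma> t u * (psi3 \<gamma> \<theta> t u)\<^sup>2) * sin (\<theta> t u))
    / curvature \<gamma> t u"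
proof -
  interpret framed_curve \<gamma> t \<theta> by (rule framed_curve_slice[OF t])
  show ?thesis
    by (simp add: Dt_normal_binormal Ds_slice_cong[where f = "Ds \<gamma> (Dt tb \<gamma>)"
          and h = "Ds \<gamma> (\<lambda>t u. curvature \<gamma> t u *\<^sub>R nu \<gamma> \<theta> t u)", OF Ds_Dt_slice]
        Ds_Ds_velocity_binormal)
qed

lemma trajectory_unit_normal:
  "(1 / norm (cross3 (Dt tb \<gamma> t u) (Du \<gamma> t u))) *\<^sub>R cross3 (Dt tb \<gamma> t u) (Du \<gamma> t u) = nu_perp \<gamma> \<theta> t u"
proof -
  interpret framed_curve \<gamma> t \<theta> by (rule framed_curve_slice[OF t])
  have "cross3 (Dt tb \<gamma> t u) (Du \<gamma> t u) = (curvature \<gamma> t u * speed \<gamma> t u) *\<^sub>R nu_perp \<gamma> \<theta> t u"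
    by (simp add: velocity[OF t] Du_eq_speed_tangent cross_mult_left cross_mult_right cross3_nu_tangent)
  moreover have "norm (nu_perp \<gamma> \<theta> t u) = 1"
    using nu_perp_unit by (simp add: norm_eq_sqrt_inner)
  ultimately show ?thesis
    using curvature_pos[of u] speed_pos[of u] by simp
qed

lemma first_fundamental_form:
  "Dt tb \<gamma> t u \<bullet> Dt tb \<gamma> t u = (curvature \<gamma> t u)\<^sup>2"
  "Dt tb \<gamma> t u \<bullet> Du \<gamma> t u = 0"
  "Du \<gamma> t u \<bullet> Du \<gamma> t u = (speed \<gamma> t u)\<^sup>2"
proof -
  interpret framed_curve \<gamma> t \<theta> by (rule framed_curve_slice[OF t])
  have "nu \<gamma> \<theta> t u \<bullet> nu \<gamma> \<theta> t u = 1" "nu \<gamma> \<theta> t u \<bullet> tangent \<gamma> t u = 0"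
    by (simp_all add: nu_def frenet_frame inner_add_left inner_add_right flip: power2_eq_square)
  then show "Dt tb \<gamma> t u \<bullet> Dt tb \<gamma> t u = (curvature \<gamma> t u)\<^sup>2"
    and "Dt tb \<gamma> t u \<bullet> Du \<gamma> t u = 0"
    by (simp_all add: velocity[OF t] Du_eq_speed_tangent power2_eq_square)
  show "Du \<gamma> t u \<bullet> Du \<gamma> t u = (speed \<gamma> t u)\<^sup>2"
    by (simp add: speed_def power2_norm_eq_inner)
qed

lemma Dt_Dt_inner_nu_perp:
  "Dt tb (Dt tb \<gamma>) t u \<bullet> nu_perp \<gamma> \<theta> t u =
    - curvature \<gamma> t u * (Dt tb \<theta> t u + Dt tb (normal \<gamma>) t u \<bullet> binormal \<gamma> t u)"
proof -
  interpret framed_curve \<gamma> t \<theta> by (rule framed_curve_slice[OF t])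
  let ?D = "\<lambda>f. vector_derivative f (at t within {0..<tb})"
  let ?\<nu> = "\<lambda>t'. cos (\<theta> t' u) *\<^sub>R normal \<gamma> t' u + sin (\<theta> t' u) *\<^sub>R binormal \<gamma> t' u"
  note nb = nontrivial_at_strip and diff = differentiable_along_flow
  have d\<nu>: "?\<nu> differentiable (at t within {0..<tb})"
    using diff by (intro derivative_intros differentiable_real_chain[OF DERIV_sin]
        differentiable_real_chain[OF DERIV_cos])
  have "Dt tb (Dt tb \<gamma>) t u = ?D (\<lambda>t'. curvature \<gamma> t' u *\<^sub>R ?\<nu> t')"
    unfolding Dt_def[of tb "Dt tb \<gamma>"]
    by (rule vector_derivative_cong_eq)
      (use t velocity in \<open>auto intro: always_eventually simp: nu_def\<close>)
  also have "\<dots> = curvature \<gamma> t u *\<^sub>R ?D ?\<nu> + ?D (\<lambda>t'. curvature \<gamma> t' u) *\<^sub>R nu \<gamma> \<theta> t u"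
    by (simp add: vector_derivative_bilinear_within[OF bounded_bilinear_scaleR nb diff(3) d\<nu>] nu_def)
  finally have "Dt tb (Dt tb \<gamma>) t u \<bullet> nu_perp \<gamma> \<theta> t u = curvature \<gamma> t u * (?D ?\<nu> \<bullet> nu_perp \<gamma> \<theta> t u)"
    by (simp add: nu_nu_perp inner_add_left)
  also have "?D ?\<nu> \<bullet> nu_perp \<gamma> \<theta> t u = - Dt tb \<theta> t u - Dt tb (normal \<gamma>) t u \<bullet> binormal \<gamma> t u"
    unfolding nu_perp_def Dt_def
    by (rule vector_derivative_rotated_frame_inner[OF nb t diff(1,2,4)])
      (use frenet_curve.frenet_frame[OF frenet_curve_slice] in auto)
  finally show ?thesis by (simp add: algebra_simps)
qed

lemma Du_Dt_inner_nu_perp: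
  "Du (Dt tb \<gamma>) t u \<bullet> nu_perp \<gamma> \<theta> t u = - speed \<gamma> t u * curvature \<gamma> t u * psi3 \<gamma> \<theta> t u"
proof -
  interpret framed_curve \<gamma> t \<theta> by (rule framed_curve_slice[OF t])
  show ?thesis
    using Du_eq_speed_Ds[OF speed_nonzero[of u], of "Dt tb \<gamma>"]
    by (simp add: Ds_Dt_slice Ds_velocity_inner)
qed

lemma Du_Du_inner_nu_perp:
  "Du (Du \<gamma>) t u \<bullet> nu_perp \<gamma> \<theta> t u = (speed \<gamma> t u)\<^sup>2 * curvature \<gamma> t u * sin (\<theta> t u)"
proof -
  interpret framed_curve \<gamma> t \<theta> by (rule framed_curve_slice[OF t])
  show ?thesis
    by (subst Du_Du_frenet) (simp add: Du_eq_speed_tangent tangent_nu_perp inner_add_left nu_perp_def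
        frenet_frame inner_diff_right)
qed

lemma gauss_curv_eq:
  "gauss_curv tb \<gamma> t u =
    - sin (\<theta> t u) * (Dt tb \<theta> t u + Dt tb (normal \<gamma>) t u \<bullet> binormal \<gamma> t u) - (psi3 \<gamma> \<theta> t u)\<^sup>2"
proof -
  have "gauss_curv tb \<gamma> t u =
      ((- curvature \<gamma> t u * (Dt tb \<theta> t u + Dt tb (normal \<gamma>) t u \<bullet> binormal \<gamma> t u))
        * ((speed \<gamma> t u)\<^sup>2 * curvature \<gamma> t u * sin (\<theta> t u))
       - (- speed \<gamma> t u * curvature \<gamma> t u * psi3 \<gamma> \<theta> t u)\<^sup>2)
      / ((curvature \<gamma> t u)\<^sup>2 * (speed \<gamma> t u)\<^sup>2 - 0\<^sup>2)"
    unfolding gauss_curv_def Let_def trajectory_unit_normal first_fundamental_form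
      Dt_Dt_inner_nu_perp Du_Dt_inner_nu_perp Du_Du_inner_nu_perp ..
  also have "\<dots> = - sin (\<theta> t u) * (Dt tb \<theta> t u + Dt tb (normal \<gamma>) t u \<bullet> binormal \<gamma> t u)
      - (psi3 \<gamma> \<theta> t u)\<^sup>2"
    using curvature_pos[OF t, of u] speed_pos[OF t, of u] by (simp add: field_simps power2_eq_square)
  finally show ?thesis .
qed

end

end

theorem mainTheorem18:
  fixes K tb :: real
    and \<gamma> :: "real \<Rightarrow> real \<Rightarrow> real^3"
    and \<theta> :: "real \<Rightarrow> real \<Rightarrow> real"
  assumes tb_pos: "0 < tb"
    and smooth_\<gamma>: "smooth_strip tb \<gamma>"
    and smooth_\<theta>: "smooth_strip tb \<theta>"
    and periodic_\<gamma>: "\<And>t u. t \<in> {0..<tb} \<Longrightarrow> \<gamma> t (u + 2 * pi) = \<gamma> t u"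
    and periodic_\<theta>: "\<And>t u. t \<in> {0..<tb} \<Longrightarrow> \<theta> t (u + 2 * pi) = \<theta> t u"
    and regular: "\<And>t u. t \<in> {0..<tb} \<Longrightarrow> speed \<gamma> t u > 0"
    and kappa_pos: "\<And>t u. t \<in> {0..<tb} \<Longrightarrow> curvature \<gamma> t u > 0"
    and psi2_nz: "\<And>t u. t \<in> {0..<tb} \<Longrightarrow> psi2 \<gamma> \<theta> t u \<noteq> 0"
    and flow_\<gamma>: "\<And>t u. t \<in> {0..<tb} \<Longrightarrow> Dt tb \<gamma> t u = curvature \<gamma> t u *\<^sub>R nu \<gamma> \<theta> t u"
    and flow_\<theta>: "\<And>t u. t \<in> {0..<tb} \<Longrightarrow> Dt tb \<theta> t u = upsilon K \<gamma> \<theta> t u"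
  shows "\<forall>t\<in>{0..<tb}. \<forall>u. gauss_curv tb \<gamma> t u = K"
proof -
  interpret framed_curvature_flow tb \<gamma> \<theta>
    using tb_pos smooth_\<gamma> smooth_\<theta> regular kappa_pos flow_\<gamma> by unfold_locales
  show ?thesis
  proof (intro ballI allI)
    fix t u assume t: "t \<in> {0..<tb}"
    have "sin (\<theta> t u) \<noteq> 0"
      using psi2_nz[OF t, of u] by (simp add: psi2_def)
    then show "gauss_curv tb \<gamma> t u = K"
      unfolding gauss_curv_eq[OF t] Dt_normal_binormal_framed[OF t] flow_\<theta>[OF t] upsilon_def Let_def
        psi1_def psi2_def
      using kappa_pos[OF t, of u] by (simp add: field_simps power2_eq_square)
  qed
qed

end
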